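(* Let $G$ be a connected graph with $V(G)=\{v_1,\dots,v_n\}$ and let $k_1,\dots,k_n$ be positive integers. If $S$ is a gp-set of $G$ that induces a complete subgraph of $G_{\rm SR}$, and $\min\{k_i:\ v_i\in S\}\ge \max\{k_i:\ v_i\notin S\}$, then $$\mathrm{gp}(G[K_{k_1},\dots,K_{k_n}])=\sum_{i:\,v_i\in S}k_i=\omega\big((G[K_{k_1},\dots,K_{k_n}])_{\rm SR}\big).$$
   Context: All graphs are finite and simple. For a graph $G$ with $V(G)=\{v_1,\dots,v_n\}$ and pairwise disjoint graphs $H_1,\dots,H_n$, the generalized lexicographic product $G[H_1,\dots,H_n]$ has vertex set $\bigcup_{i}\{(v_i,h): h\in V(H_i)\}$; $(v_i,h)$ and $(v_j,h')$ are adjacent iff either $v_iv_j\in E(G)$ (for arbitrary $h\in V(H_i)$, $h'\in V(H_j)$), or $i=j$ and $hh'\in E(H_i)$. That is, each $v_i$ is replaced by $H_i$ and each edge $v_iv_j$ by all edges between $H_i$ and $H_j$. For a connected graph $G$, a set $S\subseteq V(G)$ is a general position set if no three pairwise distinct vertices of $S$ lie on a common geodesic (shortest path); $\mathrm{gp}(G)$ is the maximum cardinality of a general position set, and a gp-set is a general position set of cardinality $\mathrm{gp}(G)$. A vertex $u$ is maximally distant from $v$ if every neighbor $w$ of $u$ satisfies $d_G(v,w)\le d_G(u,v)$; $u,v$ are mutually maximally distant (MMD) if each is maximally distant from the other. The strong resolving graph $G_{\rm SR}$ has vertex set $V(G)$, distinct vertices adjacent iff MMD in $G$. $\omega$ is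 the clique number. *)

theory Defs
  imports Main
begin

definition simple_graph :: "'a set \<Rightarrow> ('a \<Rightarrow> 'a \<Rightarrow> bool) \<Rightarrow> bool" where
  "simple_graph V E \<longleftrightarrow> finite V \<and> (\<forall>x y. E x y \<longrightarrow> x \<in> V \<and> y \<in> V)
     \<and> (\<forall>x y. E x y \<longrightarrow> E y x) \<and> (\<forall>x. \<not> E x x)"

text \<open>Walks as nonempty vertex lists; a walk with list xs has length (length xs - 1).\<close>
definition is_walk :: "'a set \<Rightarrow> ('a \<Rightarrow> 'a \<Rightarrow> bool) \<Rightarrow> 'a list \<Rightarrow> bool" where
  "is_walk V E xs \<longleftrightarrow> xs \<noteq> [] \<and> set xs \<subseteq> V \<and> (\<forall>i. Suc i < length xs \<longrightarrow> E (xs ! i) (xs ! Suc i))"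

definition connected_graph :: "'a set \<Rightarrow> ('a \<Rightarrow> 'a \<Rightarrow> bool) \<Rightarrow> bool" where
  "connected_graph V E \<longleftrightarrow> simple_graph V E \<and> V \<noteq> {} \<and>
     (\<forall>u\<in>V. \<forall>v\<in>V. \<exists>xs. is_walk V E xs \<and> hd xs = u \<and> last xs = v)"

definition gdist :: "'a set \<Rightarrow> ('a \<Rightarrow> 'a \<Rightarrow> bool) \<Rightarrow> 'a \<Rightarrow> 'a \<Rightarrow> nat" where
  "gdist V E u v = (LEAST n. \<exists>xs. is_walk V E xs \<and> hd xs = u \<and> last xs = v \<and> length xs = Suc n)"

definition is_geodesic :: "'a set \<Rightarrow> ('a \<Rightarrow> 'a \<Rightarrow> bool) \<Rightarrow> 'a list \<Rightarrow> bool" where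
  "is_geodesic V E xs \<longleftrightarrow> is_walk V E xs \<and> length xs = Suc (gdist V E (hd xs) (last xs))"

definition gp_set :: "'a set \<Rightarrow> ('a \<Rightarrow> 'a \<Rightarrow> bool) \<Rightarrow> 'a set \<Rightarrow> bool" where
  "gp_set V E S \<longleftrightarrow> S \<subseteq> V \<and>
     (\<forall>x\<in>S. \<forall>y\<in>S. \<forall>z\<in>S. x \<noteq> y \<and> y \<noteq> z \<and> x \<noteq> z \<longrightarrow>
        \<not> (\<exists>xs. is_geodesic V E xs \<and> x \<in> set xs \<and> y \<in> set xs \<and> z \<in> set xs))"

definition gp_number :: "'a set \<Rightarrow> ('a \<Rightarrow> 'a \<Rightarrow> bool) \<Rightarrow> nat" where
  "gp_number V E = Max {card S | S. gp_set V E S}"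

definition is_gp_maxset :: "'a set \<Rightarrow> ('a \<Rightarrow> 'a \<Rightarrow> bool) \<Rightarrow> 'a set \<Rightarrow> bool" where
  "is_gp_maxset V E S \<longleftrightarrow> gp_set V E S \<and> card S = gp_number V E"

definition max_distant :: "'a set \<Rightarrow> ('a \<Rightarrow> 'a \<Rightarrow> bool) \<Rightarrow> 'a \<Rightarrow> 'a \<Rightarrow> bool" where
  "max_distant V E u v \<longleftrightarrow> (\<forall>w. E u w \<longrightarrow> gdist V E v w \<le> gdist V E u v)"

definition mmd :: "'a set \<Rightarrow> ('a \<Rightarrow> 'a \<Rightarrow> bool) \<Rightarrow> 'a \<Rightarrow> 'a \<Rightarrow> bool" where
  "mmd V E u v \<longleftrightarrow> max_distant V E u v \<and> max_distant V E v u"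

text \<open>Strong resolving graph: vertex set V, adjacency of distinct MMD vertices.\<close>
definition SR_adj :: "'a set \<Rightarrow> ('a \<Rightarrow> 'a \<Rightarrow> bool) \<Rightarrow> 'a \<Rightarrow> 'a \<Rightarrow> bool" where
  "SR_adj V E u v \<longleftrightarrow> u \<in> V \<and> v \<in> V \<and> u \<noteq> v \<and> mmd V E u v"

definition is_clique :: "'a set \<Rightarrow> ('a \<Rightarrow> 'a \<Rightarrow> bool) \<Rightarrow> 'a set \<Rightarrow> bool" where
  "is_clique V E C \<longleftrightarrow> C \<subseteq> V \<and> (\<forall>x\<in>C. \<forall>y\<in>C. x \<noteq> y \<longrightarrow> E x y)"

definition clique_number :: "'a set \<Rightarrow> ('a \<Rightarrow> 'a \<Rightarrow> bool) \<Rightarrow> nat" where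
  "clique_number V E = Max {card C | C. is_clique V E C}"

text \<open>Generalized lexicographic product G[K_{k v} : v \<in> V]; the copy of K_{k v}
  has vertices (v, j) with j < k v.\<close>
definition lex_verts :: "'a set \<Rightarrow> ('a \<Rightarrow> nat) \<Rightarrow> ('a \<times> nat) set" where
  "lex_verts V k = {(v, j). v \<in> V \<and> j < k v}"

definition lex_adj :: "'a set \<Rightarrow> ('a \<Rightarrow> 'a \<Rightarrow> bool) \<Rightarrow> ('a \<Rightarrow> nat) \<Rightarrow> ('a \<times> nat) \<Rightarrow> ('a \<times> nat) \<Rightarrow> bool" where
  "lex_adj V E k p q \<longleftrightarrow> p \<in> lex_verts V k \<and> q \<in> lex_verts V k \<and>
     (E (fst p) (fst q) \<or> (fst p = fst q \<and> snd p \<noteq> snd q))"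

end

theory Submission
  imports Defs
begin

text \<open>In G[K_k1, ..., K_kn], two vertices in different copies are at the distance of
  their base vertices in G, and two vertices in the same copy are adjacent twins. Hence the
  union of the copies of S is a clique of the strong resolving graph, and such cliques are
  always in general position (a maximally distant vertex never lies strictly inside a
  geodesic). Conversely, the base vertices of a general position set of the product form a
  general position set of G, so it lies in the copies of at most gp(G) = |S| vertices, and
  the condition on the weights bounds its size by the total weight of S.\<close>

section \<open>Walks and distances\<close>

lemma is_walk_Cons_Cons:
  "is_walk V E (x # y # ys) \<longleftrightarrow> x \<in> V \<and> E x y \<and> is_walk V E (y # ys)"
  unfolding is_walk_def by (auto simp: nth_Cons split: nat.splits)

lemma is_walk_singleton: "is_walk V E [x] \<longleftrightarrow> x \<in> V"
  unfolding is_walk_def by simp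

lemma is_walk_append_tl:
  assumes "is_walk V E xs" "is_walk V E ys" "last xs = hd ys"
  shows "is_walk V E (xs @ tl ys)"
  using assms
proof (induction xs rule: induct_list012)
  case 1 then show ?case by (simp add: is_walk_def)
next
  case (2 x)
  then have "ys = x # tl ys" by (cases ys) (auto simp: is_walk_def)
  with "2.prems"(2) show ?case by simp
next
  case (3 x y zs)
  then show ?case by (simp add: is_walk_Cons_Cons)
qed

lemma is_walk_rev:
  assumes "\<forall>x y. E x y \<longrightarrow> E y x" "is_walk V E xs"
  shows "is_walk V E (rev xs)"
  using assms(2)
proof (induction xs rule: induct_list012)
  case 1 then show ?case by (simp add: is_walk_def)
next
  case (2 x) then show ?case by simp
next
  case (3 x y zs)
  then have "is_walk V E (rev (y # zs))"
    by (simp add: is_walk_Cons_Cons)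
  moreover have "is_walk V E [y, x]"
    using "3.prems" assms(1) by (auto simp: is_walk_Cons_Cons is_walk_singleton is_walk_def)
  ultimately show ?case using is_walk_append_tl by fastforce
qed

lemma gdist_le_walk:
  assumes "is_walk V E xs"
  shows "gdist V E (hd xs) (last xs) \<le> length xs - 1"
  unfolding gdist_def using assms by (intro Least_le) (auto simp: is_walk_def)

lemma shortest_walk:
  assumes "is_walk V E xs" "hd xs = u" "last xs = v"
  obtains ys where "is_walk V E ys" "hd ys = u" "last ys = v" "length ys = Suc (gdist V E u v)"
proof -
  have "\<exists>ys. is_walk V E ys \<and> hd ys = u \<and> last ys = v \<and> length ys = Suc (gdist V E u v)"
    unfolding gdist_def
    by (rule LeastI_ex, rule exI[of _ "length xs - 1"]) (use assms in \<open>auto simp: is_walk_def\<close>)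
  then show ?thesis using that by blast
qed

lemma connected_shortest_walk:
  assumes "connected_graph V E" "u \<in> V" "v \<in> V"
  obtains ys where "is_walk V E ys" "hd ys = u" "last ys = v" "length ys = Suc (gdist V E u v)"
  using assms shortest_walk unfolding connected_graph_def by metis

lemma gdist_refl: "u \<in> V \<Longrightarrow> gdist V E u u = 0"
  using gdist_le_walk[of V E "[u]"] by (simp add: is_walk_singleton)

lemma gdist_le_1:
  assumes "simple_graph V E" "E u v"
  shows "gdist V E u v \<le> 1"
  using assms gdist_le_walk[of V E "[u, v]"]
  by (simp add: simple_graph_def is_walk_Cons_Cons is_walk_singleton)

lemma gdist_eq_0_imp_eq:
  assumes "connected_graph V E" "u \<in> V" "v \<in> V" "gdist V E u v = 0"
  shows "u = v"
proof -
  obtain ys where "hd ys = u" "last ys = v" "length ys = Suc 0"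
    using connected_shortest_walk[OF assms(1-3)] assms(4) by metis
  then show ?thesis by (auto simp: length_Suc_conv)
qed

lemma gdist_sym:
  assumes "connected_graph V E" "u \<in> V" "v \<in> V"
  shows "gdist V E u v = gdist V E v u"
proof -
  have le: "gdist V E y x \<le> gdist V E x y" if xy: "x \<in> V" "y \<in> V" for x y
  proof -
    obtain xs where xs: "is_walk V E xs" "hd xs = x" "last xs = y" "length xs = Suc (gdist V E x y)"
      using connected_shortest_walk[OF assms(1) xy] .
    then have "is_walk V E (rev xs)"
      using assms(1) is_walk_rev by (metis connected_graph_def simple_graph_def)
    moreover have "xs \<noteq> []" using xs(1) by (simp add: is_walk_def)
    ultimately show ?thesis using gdist_le_walk[of V E "rev xs"] xs by (simp add: hd_rev last_rev)
  qed
  show ?thesis using le[of u v] le[of v u] assms by simp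
qed

lemma walk_via:
  assumes "connected_graph V E" "u \<in> V" "v \<in> V" "w \<in> V"
  obtains zs where "is_walk V E zs" "hd zs = u" "last zs = w" "v \<in> set zs"
    "length zs = Suc (gdist V E u v + gdist V E v w)"
proof -
  obtain xs where xs: "is_walk V E xs" "hd xs = u" "last xs = v" "length xs = Suc (gdist V E u v)"
    using connected_shortest_walk[OF assms(1-3)] .
  obtain ys where ys: "is_walk V E ys" "hd ys = v" "last ys = w" "length ys = Suc (gdist V E v w)"
    using connected_shortest_walk[OF assms(1,3,4)] .
  have "xs \<noteq> []" "ys \<noteq> []" using xs(1) ys(1) by (auto simp: is_walk_def)
  then have "hd (xs @ tl ys) = u" "last (xs @ tl ys) = w" "v \<in> set (xs @ tl ys)"
    using xs ys by (auto simp: last_append last_tl intro: last_ConsR list.exhaust[of ys])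
  moreover have "is_walk V E (xs @ tl ys)" using is_walk_append_tl xs ys by metis
  ultimately show ?thesis using that xs(4) ys(4) by simp
qed

lemma gdist_triangle:
  assumes "connected_graph V E" "u \<in> V" "v \<in> V" "w \<in> V"
  shows "gdist V E u w \<le> gdist V E u v + gdist V E v w"
  using walk_via[OF assms] gdist_le_walk by (metis diff_Suc_1)

lemma is_walk_segment:
  assumes "is_walk V E xs" "i \<le> j" "j < length xs"
  shows "is_walk V E (drop i (take (Suc j) xs))"
  using assms unfolding is_walk_def
  by (auto dest: in_set_dropD in_set_takeD)

lemma gdist_le_segment:
  assumes "is_walk V E xs" "i \<le> j" "j < length xs"
  shows "gdist V E (xs ! i) (xs ! j) \<le> j - i"
  using gdist_le_walk[OF is_walk_segment[OF assms]] assms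
  by (simp add: hd_drop_conv_nth last_conv_nth)

lemma gdist_step_towards:
  assumes "connected_graph V E" "y \<in> V" "z \<in> V" "y \<noteq> z"
  obtains w where "E y w" "Suc (gdist V E w z) \<le> gdist V E y z"
proof -
  obtain xs where xs: "is_walk V E xs" "hd xs = y" "last xs = z" "length xs = Suc (gdist V E y z)"
    using connected_shortest_walk[OF assms(1-3)] .
  have pos: "gdist V E y z \<noteq> 0" using gdist_eq_0_imp_eq[OF assms(1-3)] assms(4) by blast
  then have "length xs = Suc (Suc (gdist V E y z - 1))" using xs(4) by simp
  then obtain w rest where xs_eq: "xs = y # w # rest"
    using xs(2) by (auto simp: length_Suc_conv)
  have "E y w" using xs(1) xs_eq by (simp add: is_walk_Cons_Cons)
  moreover have "xs ! 1 = w" "xs ! (length xs - 1) = z"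
    using xs(3) xs_eq by (simp_all add: last_conv_nth del: last.simps)
  then have "gdist V E w z \<le> length xs - 2"
    using gdist_le_segment[OF xs(1), of 1 "length xs - 1"] xs_eq by simp
  ultimately show ?thesis using pos xs(4) by (intro that[of w]) auto
qed

lemma geodesic_gdist_additive:
  assumes "connected_graph V E" "is_geodesic V E xs" "i < j" "j < l" "l < length xs"
  shows "gdist V E (xs ! i) (xs ! l) = gdist V E (xs ! i) (xs ! j) + gdist V E (xs ! j) (xs ! l)"
proof -
  let ?d = "\<lambda>a b. gdist V E (xs ! a) (xs ! b)"
  define n where "n = length xs - 1"
  have walk: "is_walk V E xs" and len: "length xs = Suc (gdist V E (hd xs) (last xs))"
    using assms(2) by (simp_all add: is_geodesic_def)
  have "xs \<noteq> []" using walk by (simp add: is_walk_def)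
  then have ends: "?d 0 n = n" using len by (simp add: hd_conv_nth last_conv_nth n_def)
  have "l \<le> n" using assms(5) n_def by simp
  have n_lt: "n < length xs" using \<open>xs \<noteq> []\<close> n_def by simp
  have seg: "?d a b \<le> b - a" if "a \<le> b" "b \<le> n" for a b
    using gdist_le_segment[OF walk that(1)] that(2) n_lt by simp
  have in_V: "xs ! a \<in> V" if "a \<le> n" for a
    using walk that n_lt unfolding is_walk_def by auto
  have tri: "?d a c \<le> ?d a b + ?d b c" if "a \<le> n" "b \<le> n" "c \<le> n" for a b c
    using gdist_triangle[OF assms(1) in_V[OF that(1)] in_V[OF that(2)] in_V[OF that(3)]] .
  have "n \<le> ?d 0 i + ?d i l + ?d l n"
    using ends tri[of 0 i n] tri[of i l n] assms(3,4) \<open>l \<le> n\<close> by simp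
  moreover have "?d 0 i \<le> i" "?d l n \<le> n - l"
    using seg[of 0 i] seg[of l n] assms(3,4) \<open>l \<le> n\<close> by simp_all
  ultimately have "l - i \<le> ?d i l" using \<open>l \<le> n\<close> by linarith
  moreover have "?d i j \<le> j - i" "?d j l \<le> l - j" "?d i l \<le> ?d i j + ?d j l"
    using seg[of i j] seg[of j l] tri[of i j l] assms(3,4) \<open>l \<le> n\<close> by simp_all
  ultimately show ?thesis using assms(3,4) by linarith
qed

section \<open>General position and maximally distant vertices\<close>

definition between :: "'a set \<Rightarrow> ('a \<Rightarrow> 'a \<Rightarrow> bool) \<Rightarrow> 'a \<Rightarrow> 'a \<Rightarrow> 'a \<Rightarrow> bool" where
  "between V E x y z \<longleftrightarrow> gdist V E x z = gdist V E x y + gdist V E y z"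

lemma geodesic_through_between:
  assumes "connected_graph V E" "x \<in> V" "y \<in> V" "z \<in> V" "between V E x y z"
  obtains xs where "is_geodesic V E xs" "x \<in> set xs" "y \<in> set xs" "z \<in> set xs"
proof -
  obtain zs where zs: "is_walk V E zs" "hd zs = x" "last zs = z" "y \<in> set zs"
    "length zs = Suc (gdist V E x y + gdist V E y z)"
    using walk_via[OF assms(1-4)] .
  then have "zs \<noteq> []" by (simp add: is_walk_def)
  then show ?thesis
    using zs assms(5) by (intro that[of zs]) (auto simp: is_geodesic_def between_def)
qed

lemma geodesic_ordered_between:
  assumes "connected_graph V E" "is_geodesic V E xs"
    and "x \<in> set xs" "y \<in> set xs" "z \<in> set xs" "x \<noteq> y" "y \<noteq> z" "x \<noteq> z"
  obtains a b c where "{a, b, c} = {x, y, z}" "between V E a b c"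
proof -
  obtain i j l where ijl: "i < length xs" "j < length xs" "l < length xs"
    "xs ! i = x" "xs ! j = y" "xs ! l = z"
    using assms(3-5) by (metis in_set_conv_nth)
  then have "i \<noteq> j" "j \<noteq> l" "i \<noteq> l" using assms(6-8) by auto
  then obtain p q r where pqr: "p < q" "q < r" "{p, q, r} = {i, j, l}"
    by (metis insert_commute linorder_less_linear)
  then have "r \<in> {i, j, l}" by blast
  then have "r < length xs" using ijl by blast
  then have "between V E (xs ! p) (xs ! q) (xs ! r)"
    using geodesic_gdist_additive[OF assms(1,2) pqr(1,2)] by (simp add: between_def)
  moreover have "{xs ! p, xs ! q, xs ! r} = {x, y, z}"
    using arg_cong[OF pqr(3), of "image (nth xs)"] ijl by simp
  ultimately show ?thesis using that by blast
qed

lemma gp_set_iff_not_between: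
  assumes "connected_graph V E"
  shows "gp_set V E S \<longleftrightarrow> S \<subseteq> V \<and>
    (\<forall>x\<in>S. \<forall>y\<in>S. \<forall>z\<in>S. x \<noteq> y \<and> y \<noteq> z \<and> x \<noteq> z \<longrightarrow> \<not> between V E x y z)"
    (is "_ \<longleftrightarrow> _ \<and> ?no_between")
proof
  assume gp: "gp_set V E S"
  then have "S \<subseteq> V" by (simp add: gp_set_def)
  moreover have "\<not> between V E x y z"
    if xyz: "x \<in> S" "y \<in> S" "z \<in> S" "x \<noteq> y" "y \<noteq> z" "x \<noteq> z" for x y z
  proof
    assume "between V E x y z"
    then obtain xs where "is_geodesic V E xs" "x \<in> set xs" "y \<in> set xs" "z \<in> set xs"
      using geodesic_through_between[OF assms] xyz(1-3) \<open>S \<subseteq> V\<close> by blast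
    then show False using gp xyz unfolding gp_set_def by blast
  qed
  ultimately show "S \<subseteq> V \<and> ?no_between" by blast
next
  assume "S \<subseteq> V \<and> ?no_between"
  moreover have False
    if H: "x \<in> S" "y \<in> S" "z \<in> S" "x \<noteq> y" "y \<noteq> z" "x \<noteq> z" "?no_between"
      "is_geodesic V E xs" "x \<in> set xs" "y \<in> set xs" "z \<in> set xs" for x y z xs
  proof -
    obtain a b c where "{a, b, c} = {x, y, z}" "between V E a b c"
      using geodesic_ordered_between[OF assms H(8-11,4-6)] .
    moreover from this(1) have "a \<in> S \<and> b \<in> S \<and> c \<in> S"
      using H(1-3) by auto
    moreover from \<open>{a, b, c} = {x, y, z}\<close> have "a \<noteq> b" "b \<noteq> c" "a \<noteq> c"
      using H(4-6) by (metis insert_iff singletonD)+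
    ultimately show False using H(7) by blast
  qed
  ultimately show "gp_set V E S" unfolding gp_set_def by blast
qed

lemma max_distant_not_between:
  assumes "connected_graph V E" "x \<in> V" "y \<in> V" "z \<in> V" "y \<noteq> z"
    and "max_distant V E y x"
  shows "\<not> between V E x y z"
proof
  assume "between V E x y z"
  obtain w where w: "E y w" "Suc (gdist V E w z) \<le> gdist V E y z"
    using gdist_step_towards[OF assms(1,3-5)] .
  then have "w \<in> V" using assms(1) by (simp add: connected_graph_def simple_graph_def)
  have "gdist V E x z \<le> gdist V E x w + gdist V E w z"
    using gdist_triangle[OF assms(1,2) \<open>w \<in> V\<close> assms(4)] .
  moreover have "gdist V E x w \<le> gdist V E y x"
    using assms(6) w(1) unfolding max_distant_def by blast
  moreover have "gdist V E y x = gdist V E x y"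
    using gdist_sym[OF assms(1-3)] ..
  ultimately show False
    using w(2) \<open>between V E x y z\<close> unfolding between_def by linarith
qed

lemma SR_clique_imp_gp_set:
  assumes "connected_graph V E" "is_clique V (SR_adj V E) C"
  shows "gp_set V E C"
proof -
  have "C \<subseteq> V" using assms(2) by (simp add: is_clique_def)
  moreover have "max_distant V E y x" if "x \<in> C" "y \<in> C" "x \<noteq> y" for x y
    using assms(2) that by (simp add: is_clique_def SR_adj_def mmd_def)
  ultimately show ?thesis
    using max_distant_not_between[OF assms(1)] gp_set_iff_not_between[OF assms(1)]
    by (meson subsetD)
qed

lemma finite_cards_of_subsets:
  assumes "finite V" "\<And>S. P S \<Longrightarrow> S \<subseteq> V"
  shows "finite {card S | S. P S}"
proof -
  have "finite {S. P S}" using assms by (metis Collect_mono Pow_def finite_Pow_iff finite_subset)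
  then show ?thesis by (simp add: setcompr_eq_image)
qed

lemma Max_card_ge:
  assumes "finite V" "\<And>S. P S \<Longrightarrow> S \<subseteq> V" "P T"
  shows "card T \<le> Max {card S | S. P S}"
  using finite_cards_of_subsets[OF assms(1,2)] assms(3) by (auto intro: Max_ge)

lemma Max_card_eqI:
  assumes "finite V" "\<And>S. P S \<Longrightarrow> S \<subseteq> V" "P T" "\<And>S. P S \<Longrightarrow> card S \<le> card T"
  shows "Max {card S | S. P S} = card T"
  using finite_cards_of_subsets[OF assms(1,2)] assms(3,4) by (intro Max_eqI) auto

lemma card_le_gp_number: "finite V \<Longrightarrow> gp_set V E T \<Longrightarrow> card T \<le> gp_number V E"
  unfolding gp_number_def by (rule Max_card_ge) (auto simp: gp_set_def)

lemma gp_number_eqI: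
  assumes "finite V" "gp_set V E T" "\<And>S. gp_set V E S \<Longrightarrow> card S \<le> card T"
  shows "gp_number V E = card T"
  unfolding gp_number_def using assms by (intro Max_card_eqI) (auto simp: gp_set_def)

lemma clique_number_eqI:
  assumes "finite V" "is_clique V R C" "\<And>C'. is_clique V R C' \<Longrightarrow> card C' \<le> card C"
  shows "clique_number V R = card C"
  unfolding clique_number_def using assms by (intro Max_card_eqI) (auto simp: is_clique_def)

section \<open>The lexicographic product with complete graphs\<close>

lemma lex_verts_Sigma: "lex_verts V k = Sigma V (\<lambda>v. {..<k v})"
  by (auto simp: lex_verts_def)

lemma card_lex_verts: "finite S \<Longrightarrow> card (lex_verts S k) = (\<Sum>v\<in>S. k v)"
  by (simp add: lex_verts_Sigma)

lemma simple_graph_lex: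
  assumes "simple_graph V E"
  shows "simple_graph (lex_verts V k) (lex_adj V E k)"
  using assms unfolding simple_graph_def lex_adj_def by (auto simp: lex_verts_Sigma)

lemma is_walk_lex_section:
  assumes "is_walk V E xs" "\<forall>v\<in>set xs. c v < k v"
  shows "is_walk (lex_verts V k) (lex_adj V E k) (map (\<lambda>v. (v, c v)) xs)"
  using assms unfolding is_walk_def lex_adj_def lex_verts_def by auto

lemma lex_walk_lift:
  assumes "is_walk V E xs" "hd xs = a" "last xs = b" "a \<noteq> b" "i < k a" "j < k b"
    and "\<forall>v\<in>V. 0 < k v"
  obtains ys where "is_walk (lex_verts V k) (lex_adj V E k) ys" "hd ys = (a, i)" "last ys = (b, j)"
    "length ys = length xs"
proof -
  define c where "c v = (if v = a then i else if v = b then j else 0)" for v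
  have "xs \<noteq> []" "set xs \<subseteq> V" using assms(1) by (auto simp: is_walk_def)
  then have "\<forall>v\<in>set xs. c v < k v" using assms(5-7) by (auto simp: c_def)
  then have "is_walk (lex_verts V k) (lex_adj V E k) (map (\<lambda>v. (v, c v)) xs)"
    using is_walk_lex_section[OF assms(1)] by blast
  then show ?thesis
    using \<open>xs \<noteq> []\<close> assms(2-4) by (intro that) (auto simp: c_def hd_map last_map)
qed

lemma connected_graph_lex:
  assumes "connected_graph V E" "\<forall>v\<in>V. 0 < k v"
  shows "connected_graph (lex_verts V k) (lex_adj V E k)"
proof -
  have "\<exists>ys. is_walk (lex_verts V k) (lex_adj V E k) ys \<and> hd ys = (a, i) \<and> last ys = (b, j)"
    if ai: "a \<in> V" "i < k a" and bj: "b \<in> V" "j < k b" for a i b j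
  proof (cases "a = b")
    case True
    then have "is_walk (lex_verts V k) (lex_adj V E k) (remdups [(a, i), (b, j)])"
      using ai bj by (auto simp: is_walk_Cons_Cons is_walk_singleton lex_adj_def lex_verts_def)
    then show ?thesis using True by (intro exI) auto
  next
    case False
    obtain xs where "is_walk V E xs" "hd xs = a" "last xs = b"
      using assms(1) ai(1) bj(1) unfolding connected_graph_def by blast
    from lex_walk_lift[OF this False ai(2) bj(2) assms(2)] show ?thesis by metis
  qed
  moreover obtain v where "v \<in> V" using assms(1) by (auto simp: connected_graph_def)
  then have "lex_verts V k \<noteq> {}" using assms(2) by (auto simp: lex_verts_def)
  moreover have "simple_graph (lex_verts V k) (lex_adj V E k)"
    using simple_graph_lex assms(1) by (auto simp: connected_graph_def)
  ultimately show ?thesis unfolding connected_graph_def lex_verts_def by blast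
qed

lemma gdist_fst_le_lex_walk:
  assumes "connected_graph V E" "is_walk (lex_verts V k) (lex_adj V E k) ys"
  shows "gdist V E (fst (hd ys)) (fst (last ys)) \<le> length ys - 1"
  using assms(2)
proof (induction ys rule: induct_list012)
  case 1 then show ?case by (simp add: is_walk_def)
next
  case (2 p)
  then have "fst p \<in> V" by (auto simp: is_walk_singleton lex_verts_def)
  then show ?case by (simp add: gdist_refl)
next
  case (3 p q ys)
  then have walk: "is_walk (lex_verts V k) (lex_adj V E k) (q # ys)" and adj: "lex_adj V E k p q"
    by (simp_all add: is_walk_Cons_Cons)
  have "last (q # ys) \<in> lex_verts V k" using walk by (auto simp: is_walk_def)
  then have in_V: "fst p \<in> V" "fst q \<in> V" "fst (last (q # ys)) \<in> V"
    using adj by (auto simp: lex_adj_def lex_verts_def)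
  have "gdist V E (fst p) (fst q) \<le> 1"
    using adj gdist_le_1[of V E] gdist_refl[OF in_V(1), of E] assms(1)
    by (cases "fst p = fst q") (auto simp: lex_adj_def connected_graph_def)
  then show ?case
    using "3.IH"(2)[OF walk] gdist_triangle[OF assms(1) in_V] by simp
qed

lemma gdist_lex_eq:
  assumes "connected_graph V E" "\<forall>v\<in>V. 0 < k v"
    and "(a, i) \<in> lex_verts V k" "(b, j) \<in> lex_verts V k" "a \<noteq> b"
  shows "gdist (lex_verts V k) (lex_adj V E k) (a, i) (b, j) = gdist V E a b"
proof (rule antisym)
  have "a \<in> V" "i < k a" "b \<in> V" "j < k b" using assms(3,4) by (auto simp: lex_verts_def)
  obtain xs where xs: "is_walk V E xs" "hd xs = a" "last xs = b" "length xs = Suc (gdist V E a b)"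
    using connected_shortest_walk[OF assms(1) \<open>a \<in> V\<close> \<open>b \<in> V\<close>] .
  obtain ys where "is_walk (lex_verts V k) (lex_adj V E k) ys" "hd ys = (a, i)" "last ys = (b, j)"
    "length ys = length xs"
    using lex_walk_lift[OF xs(1-3) assms(5) \<open>i < k a\<close> \<open>j < k b\<close> assms(2)] .
  then show "gdist (lex_verts V k) (lex_adj V E k) (a, i) (b, j) \<le> gdist V E a b"
    using gdist_le_walk xs(4) by fastforce
next
  obtain ys where "is_walk (lex_verts V k) (lex_adj V E k) ys" "hd ys = (a, i)" "last ys = (b, j)"
    "length ys = Suc (gdist (lex_verts V k) (lex_adj V E k) (a, i) (b, j))"
    using connected_shortest_walk[OF connected_graph_lex[OF assms(1,2)] assms(3,4)] .
  then show "gdist V E a b \<le> gdist (lex_verts V k) (lex_adj V E k) (a, i) (b, j)"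
    using gdist_fst_le_lex_walk[OF assms(1)] by fastforce
qed

lemma gdist_lex_same_fst_le_1:
  assumes "simple_graph V E" "p \<in> lex_verts V k" "q \<in> lex_verts V k" "fst p = fst q"
  shows "gdist (lex_verts V k) (lex_adj V E k) p q \<le> 1"
proof (cases "p = q")
  case True then show ?thesis using gdist_refl[OF assms(2)] by simp
next
  case False
  then have "lex_adj V E k p q" using assms(2-4) by (auto simp: lex_adj_def prod_eq_iff)
  then show ?thesis using gdist_le_1[OF simple_graph_lex[OF assms(1)]] by blast
qed

lemma gdist_lex_neighbour_le_1:
  assumes "simple_graph V E" "lex_adj V E k p w" "q \<in> lex_verts V k" "fst q = fst p"
  shows "gdist (lex_verts V k) (lex_adj V E k) q w \<le> 1"
proof (cases "fst w = fst q")
  case True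
  then show ?thesis
    using gdist_lex_same_fst_le_1[OF assms(1,3)] assms(2) by (simp add: lex_adj_def)
next
  case False
  then have "lex_adj V E k q w" using assms(2-4) by (simp add: lex_adj_def)
  then show ?thesis using gdist_le_1[OF simple_graph_lex[OF assms(1)]] by blast
qed

lemma max_distant_lex_same_fst:
  assumes "connected_graph V E" "\<forall>v\<in>V. 0 < k v"
    and "p \<in> lex_verts V k" "q \<in> lex_verts V k" "fst p = fst q" "p \<noteq> q"
  shows "max_distant (lex_verts V k) (lex_adj V E k) p q"
proof -
  have "gdist (lex_verts V k) (lex_adj V E k) p q \<noteq> 0"
    using gdist_eq_0_imp_eq[OF connected_graph_lex[OF assms(1,2)] assms(3,4)] assms(6) by blast
  moreover have "simple_graph V E" using assms(1) by (simp add: connected_graph_def)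
  ultimately show ?thesis
    using gdist_lex_neighbour_le_1 assms(4,5) unfolding max_distant_def
    by (metis One_nat_def Suc_leI le_trans neq0_conv)
qed

lemma max_distant_lex:
  assumes "connected_graph V E" "\<forall>v\<in>V. 0 < k v"
    and "(a, i) \<in> lex_verts V k" "(b, j) \<in> lex_verts V k" "a \<noteq> b"
    and "max_distant V E a b"
  shows "max_distant (lex_verts V k) (lex_adj V E k) (a, i) (b, j)"
  unfolding max_distant_def
proof (intro allI impI)
  let ?D = "gdist (lex_verts V k) (lex_adj V E k)" and ?d = "gdist V E"
  fix w assume adj: "lex_adj V E k (a, i) w"
  obtain c l where w: "w = (c, l)" by fastforce
  have "w \<in> lex_verts V k" and c: "c = a \<or> E a c" using adj w by (auto simp: lex_adj_def)
  have "a \<in> V" "b \<in> V" using assms(3,4) by (auto simp: lex_verts_def)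
  have Dab: "?D (a, i) (b, j) = ?d a b" using gdist_lex_eq[OF assms(1-5)] .
  show "?D (b, j) w \<le> ?D (a, i) (b, j)"
  proof (cases "c = b")
    case True
    have "?d a b \<noteq> 0" using gdist_eq_0_imp_eq[OF assms(1) \<open>a \<in> V\<close> \<open>b \<in> V\<close>] assms(5) by blast
    moreover have "simple_graph V E" using assms(1) by (simp add: connected_graph_def)
    then have "?D (b, j) w \<le> 1"
      using gdist_lex_same_fst_le_1[OF _ assms(4) \<open>w \<in> lex_verts V k\<close>] True w by simp
    ultimately show ?thesis using Dab by linarith
  next
    case False
    then have "?D (b, j) w = ?d b c"
      using gdist_lex_eq[OF assms(1,2,4)] \<open>w \<in> lex_verts V k\<close> w by auto
    moreover have "?d b c \<le> ?d a b"
      using c assms(6) gdist_sym[OF assms(1) \<open>a \<in> V\<close> \<open>b \<in> V\<close>]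
      unfolding max_distant_def by auto
    ultimately show ?thesis using Dab by linarith
  qed
qed

lemma SR_clique_lex:
  assumes "connected_graph V E" "\<forall>v\<in>V. 0 < k v" "is_clique V (SR_adj V E) S"
  shows "is_clique (lex_verts V k) (SR_adj (lex_verts V k) (lex_adj V E k)) (lex_verts S k)"
proof -
  have "S \<subseteq> V" using assms(3) by (simp add: is_clique_def)
  then have sub: "lex_verts S k \<subseteq> lex_verts V k" by (auto simp: lex_verts_def)
  have "max_distant (lex_verts V k) (lex_adj V E k) p q"
    if "p \<in> lex_verts S k" "q \<in> lex_verts S k" "p \<noteq> q" for p q
  proof (cases "fst p = fst q")
    case True
    then show ?thesis using max_distant_lex_same_fst[OF assms(1,2)] that sub by blast
  next
    case False
    then have "max_distant V E (fst p) (fst q)"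
      using assms(3) that by (auto simp: is_clique_def SR_adj_def mmd_def lex_verts_def)
    then show ?thesis
      using max_distant_lex[OF assms(1,2), of "fst p" "snd p" "fst q" "snd q"] that sub False
      by auto
  qed
  then show ?thesis using sub by (auto simp: is_clique_def SR_adj_def mmd_def)
qed

lemma gp_set_fst_image:
  assumes "connected_graph V E" "\<forall>v\<in>V. 0 < k v" "gp_set (lex_verts V k) (lex_adj V E k) T"
  shows "gp_set V E (fst ` T)"
proof -
  have T: "T \<subseteq> lex_verts V k" using assms(3) by (simp add: gp_set_def)
  have gdist_eq: "gdist (lex_verts V k) (lex_adj V E k) p q = gdist V E (fst p) (fst q)"
    if "p \<in> T" "q \<in> T" "fst p \<noteq> fst q" for p q
    using gdist_lex_eq[OF assms(1,2), of "fst p" "snd p" "fst q" "snd q"] that T by auto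
  have "\<not> between V E (fst p) (fst q) (fst r)"
    if "p \<in> T" "q \<in> T" "r \<in> T" "fst p \<noteq> fst q" "fst q \<noteq> fst r" "fst p \<noteq> fst r" for p q r
    using assms(3) that gdist_eq
    unfolding gp_set_iff_not_between[OF connected_graph_lex[OF assms(1,2)]] between_def
    by metis
  moreover have "fst ` T \<subseteq> V" using T by (auto simp: lex_verts_def)
  ultimately show ?thesis unfolding gp_set_iff_not_between[OF assms(1)] by blast
qed

lemma card_le_sum_fst_image:
  assumes "finite V" "T \<subseteq> lex_verts V k"
  shows "card T \<le> (\<Sum>v\<in>fst ` T. k v)"
proof -
  have "fst ` T \<subseteq> V" using assms(2) by (auto simp: lex_verts_def)
  then have "finite (fst ` T)" using assms(1) by (rule finite_subset)
  moreover have "T \<subseteq> lex_verts (fst ` T) k" using assms(2) by (force simp: lex_verts_def)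
  ultimately have "card T \<le> card (lex_verts (fst ` T) k)"
    by (intro card_mono) (simp_all add: lex_verts_Sigma)
  also have "\<dots> = (\<Sum>v\<in>fst ` T. k v)" using card_lex_verts \<open>finite (fst ` T)\<close> .
  finally show ?thesis .
qed

lemma sum_le_sum_heavier:
  fixes k :: "'a \<Rightarrow> nat"
  assumes "finite S" "finite P" "card P \<le> card S" "\<forall>u\<in>S. \<forall>w\<in>P - S. k w \<le> k u"
  shows "sum k P \<le> sum k S"
proof -
  have card_le: "card (P - S) \<le> card (S - P)"
    using assms(1-3) card_Int_Diff[of P S] card_Int_Diff[of S P] by (simp add: Int_commute)
  have "sum k (P - S) \<le> sum k (S - P)"
  proof (cases "S - P = {}")
    case True
    then have "card (P - S) = 0" using card_le unfolding True by simp
    then have "P - S = {}" using assms(2) by simp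
    then show ?thesis by (simp only: sum.empty zero_le)
  next
    case False
    define m where "m = Min (k ` (S - P))"
    have "k w \<le> m" if "w \<in> P - S" for w
      using assms(1,4) False that by (simp add: m_def Min_ge_iff)
    then have "sum k (P - S) \<le> card (P - S) * m"
      using sum_bounded_above[of "P - S" k m] by simp
    also have "\<dots> \<le> card (S - P) * m" using card_le by simp
    also have "\<dots> \<le> sum k (S - P)"
      using sum_bounded_below[of "S - P" m k] assms(1) by (simp add: m_def)
    finally show ?thesis .
  qed
  then show ?thesis
    using sum.Int_Diff[OF assms(1), of k P] sum.Int_Diff[OF assms(2), of k S]
    by (simp add: Int_commute)
qed

lemma card_gp_set_lex_le:
  assumes "connected_graph V E" "\<forall>v\<in>V. 0 < k v" "is_gp_maxset V E S"
    and "\<forall>u\<in>S. \<forall>w\<in>V - S. k w \<le> k u"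
    and "gp_set (lex_verts V k) (lex_adj V E k) T"
  shows "card T \<le> (\<Sum>v\<in>S. k v)"
proof -
  have "finite V" using assms(1) by (simp add: connected_graph_def simple_graph_def)
  have T: "T \<subseteq> lex_verts V k" using assms(5) by (simp add: gp_set_def)
  then have "fst ` T \<subseteq> V" by (auto simp: lex_verts_def)
  have "S \<subseteq> V" using assms(3) by (simp add: is_gp_maxset_def gp_set_def)
  have "gp_set V E (fst ` T)" using gp_set_fst_image[OF assms(1,2,5)] .
  then have "card (fst ` T) \<le> card S"
    using card_le_gp_number[OF \<open>finite V\<close>] assms(3) by (simp add: is_gp_maxset_def)
  then have "(\<Sum>v\<in>fst ` T. k v) \<le> (\<Sum>v\<in>S. k v)"
    using sum_le_sum_heavier \<open>finite V\<close> \<open>fst ` T \<subseteq> V\<close> \<open>S \<subseteq> V\<close> assms(4)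
    by (metis Diff_mono finite_subset order_refl subsetD)
  then show ?thesis using card_le_sum_fst_image[OF \<open>finite V\<close> T] by linarith
qed

theorem theorem5p1:
  fixes V :: "'a set" and E :: "'a \<Rightarrow> 'a \<Rightarrow> bool" and k :: "'a \<Rightarrow> nat" and S :: "'a set"
  assumes "connected_graph V E"
    and "\<forall>v\<in>V. 0 < k v"
    and "is_gp_maxset V E S"
    and "is_clique V (SR_adj V E) S"
    and "\<forall>u\<in>S. \<forall>w\<in>V - S. k w \<le> k u"
  shows "gp_number (lex_verts V k) (lex_adj V E k) = (\<Sum>v\<in>S. k v)
    \<and> (\<Sum>v\<in>S. k v) = clique_number (lex_verts V k)
         (SR_adj (lex_verts V k) (lex_adj V E k))"
proof -
  let ?V = "lex_verts V k" and ?E = "lex_adj V E k"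
  have connected: "connected_graph ?V ?E" using connected_graph_lex[OF assms(1,2)] .
  then have "finite ?V" by (simp add: connected_graph_def simple_graph_def)
  have "S \<subseteq> V" using assms(4) by (simp add: is_clique_def)
  then have card_S: "card (lex_verts S k) = (\<Sum>v\<in>S. k v)"
    using assms(1) card_lex_verts by (metis connected_graph_def simple_graph_def finite_subset)
  have clique: "is_clique ?V (SR_adj ?V ?E) (lex_verts S k)"
    using SR_clique_lex[OF assms(1,2,4)] .
  have gp_le: "card T \<le> (\<Sum>v\<in>S. k v)" if "gp_set ?V ?E T" for T
    using card_gp_set_lex_le[OF assms(1,2,3,5) that] .
  have "gp_number ?V ?E = card (lex_verts S k)"
    using gp_number_eqI[OF \<open>finite ?V\<close> SR_clique_imp_gp_set[OF connected clique]] gp_le card_S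
    by simp
  moreover have "clique_number ?V (SR_adj ?V ?E) = card (lex_verts S k)"
    using clique_number_eqI[OF \<open>finite ?V\<close> clique] gp_le SR_clique_imp_gp_set[OF connected]
      card_S by simp
  ultimately show ?thesis using card_S by simp
qed

end
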